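(* Let $g\in H(\mathbb{D})$ be such that $\log(g)\in\mathcal{B}$, let $\nu$ be an analytic weight and let $\mu$ be an arbitrary weight. Then $S_g: \mathcal{B}^{\infty}_\nu\rightarrow H^{\infty}_\mu$ is bounded if and only if $$\sup_{0\leq t<1}\ \sup_{0\leq\theta<2\pi}\mu(t)\int_0^t\frac{|g(re^{i\theta})|}{\nu(r)}\,dr<+\infty\,.$$
   Context: $\mathbb{D}$ is the open unit disk and $H(\mathbb{D})$ the space of analytic functions on $\mathbb{D}$. A weight is a non-negative continuous function $\nu$ on $\mathbb{D}$ with $\nu(z)=\nu(|z|)$ for all $z$, which is decreasing in $|z|$; we write $\nu(r)$ for its value at $|z|=r$. For a weight $\nu$: $H^{\infty}_\nu=\{f\in H(\mathbb{D}): \sup_{z}\nu(z)|f(z)|<\infty\}$, $\mathcal{B}^{\infty}_\nu=\{f\in H(\mathbb{D}): |f(0)|+\sup_{z}\nu(z)|f'(z)|<\infty\}$. The Bloch space is $\mathcal{B}=\{f\in H(\mathbb{D}): |f(0)|+\sup_{z}(1-|z|^2)|f'(z)|<\infty\}$; "$\log(g)\in\mathcal{B}$" means $g$ has no zeros in $\mathbb{D}$ and an analytic branch of $\log g$ belongs to $\mathcal{B}$. A weight $\nu$ is analytic if $\nu(z)=1/F(|z|)$ for some $F\in H(\mathbb{D})$ with $|F(z)|\leq F(|z|)$ for all $z$. For $g\in H(\mathbb{D})$, $(S_gf)(z)=\int_0^z f'(\omega)g(\omega)\,d\omega$. *)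

theory Defs
  imports "HOL-Complex_Analysis.Complex_Analysis"
begin

abbreviation unit_disc :: "complex set" where
  "unit_disc \<equiv> ball 0 1"

definition is_weight :: "(complex \<Rightarrow> real) \<Rightarrow> bool" where
  "is_weight \<nu> \<longleftrightarrow>
     continuous_on unit_disc \<nu> \<and>
     (\<forall>z\<in>unit_disc. 0 \<le> \<nu> z) \<and>
     (\<forall>z\<in>unit_disc. \<nu> z = \<nu> (complex_of_real (norm z))) \<and>
     (\<forall>z\<in>unit_disc. \<forall>w\<in>unit_disc. norm z \<le> norm w \<longrightarrow> \<nu> w \<le> \<nu> z)"

text \<open>Analytic weight: nu(z) = 1 / F(|z|) with F analytic on the disc and |F(z)| <= F(|z|).\<close>
definition analytic_weight :: "(complex \<Rightarrow> real) \<Rightarrow> bool" where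
  "analytic_weight \<nu> \<longleftrightarrow> is_weight \<nu> \<and>
     (\<exists>F. F holomorphic_on unit_disc \<and>
        (\<forall>z\<in>unit_disc. complex_of_real (\<nu> z) * F (complex_of_real (norm z)) = 1) \<and>
        (\<forall>z\<in>unit_disc. norm (F z) \<le> Re (F (complex_of_real (norm z)))))"

definition H_inf_w :: "(complex \<Rightarrow> real) \<Rightarrow> (complex \<Rightarrow> complex) set" where
  "H_inf_w \<mu> = {f. f holomorphic_on unit_disc \<and>
     (\<exists>C. \<forall>z\<in>unit_disc. \<mu> z * norm (f z) \<le> C)}"

definition B_inf_w :: "(complex \<Rightarrow> real) \<Rightarrow> (complex \<Rightarrow> complex) set" where
  "B_inf_w \<nu> = {f. f holomorphic_on unit_disc \<and>
     (\<exists>C. \<forall>z\<in>unit_disc. \<nu> z * norm (deriv f z) \<le> C)}"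

definition B_inf_norm :: "(complex \<Rightarrow> real) \<Rightarrow> (complex \<Rightarrow> complex) \<Rightarrow> real" where
  "B_inf_norm \<nu> f = norm (f 0) + (SUP z\<in>unit_disc. \<nu> z * norm (deriv f z))"

definition bloch :: "(complex \<Rightarrow> complex) set" where
  "bloch = {f. f holomorphic_on unit_disc \<and>
     (\<exists>C. \<forall>z\<in>unit_disc. (1 - (norm z)^2) * norm (deriv f z) \<le> C)}"

definition log_in_bloch :: "(complex \<Rightarrow> complex) \<Rightarrow> bool" where
  "log_in_bloch g \<longleftrightarrow> (\<exists>h\<in>bloch. \<forall>z\<in>unit_disc. exp (h z) = g z)"

definition S_op :: "(complex \<Rightarrow> complex) \<Rightarrow> (complex \<Rightarrow> complex) \<Rightarrow> complex \<Rightarrow> complex" where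
  "S_op g f z = contour_integral (linepath 0 z) (\<lambda>w. deriv f w * g w)"

definition S_bounded :: "(complex \<Rightarrow> complex) \<Rightarrow> (complex \<Rightarrow> real) \<Rightarrow> (complex \<Rightarrow> real) \<Rightarrow> bool" where
  "S_bounded g \<nu> \<mu> \<longleftrightarrow> (\<exists>C. \<forall>f\<in>B_inf_w \<nu>. S_op g f \<in> H_inf_w \<mu> \<and>
      (\<forall>z\<in>unit_disc. \<mu> z * norm (S_op g f z) \<le> C * B_inf_norm \<nu> f))"

end

theory Submission
  imports Defs
begin

text \<open>
  Sufficiency: for \<open>z = t * \<zeta>\<close> with \<open>norm \<zeta> = 1\<close> the operator is an integral along the radius,
  \<open>S_op g f z = \<zeta> * \<integral>\<^sub>0\<^sup>t f'(r \<zeta>) g(r \<zeta>) dr\<close>, and \<open>\<nu> r * \<bar>f'(r \<zeta>)\<bar>\<close> is bounded by the norm of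
  \<open>f\<close>, so \<open>\<mu> t * \<bar>S_op g f z\<bar>\<close> is at most that norm times the radial integral.

  Necessity: let \<open>F\<close> be analytic with \<open>F r = 1 / \<nu> r\<close> and \<open>\<bar>F\<bar> \<le> 1 / \<nu>\<close>, and \<open>\<phi>\<close> bounded
  analytic. The primitive \<open>f\<close> of \<open>F (cnj \<zeta> * w) * \<phi> w\<close> has norm at most \<open>sup \<bar>\<phi>\<bar>\<close>, and
  \<open>Re (cnj \<zeta> * S_op g f (t \<zeta>)) = \<integral>\<^sub>0\<^sup>t Re (\<phi> g)(r \<zeta>) / \<nu> r dr\<close>. So it suffices to find \<open>\<phi>\<close>,
  bounded independently of \<open>t\<close> and \<open>\<zeta>\<close>, with \<open>\<bar>g\<bar> \<le> 2 Re (\<phi> g)\<close> on the segment \<open>[0, t \<zeta>]\<close>.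
  Write \<open>g = exp h\<close> with \<open>h\<close> Bloch. In the hyperbolic coordinate \<open>s\<close> (\<open>r = tanh (s / 2)\<close>) the
  argument \<open>Im h (r \<zeta>)\<close> is Lipschitz; cut off beyond the end of the segment and convolved with
  a narrow Gaussian it becomes an entire function \<open>V\<close>, real on the real line, within \<open>1\<close> of
  the argument, and with \<open>\<bar>Im V\<bar>\<close> bounded on \<open>\<bar>Im w\<bar> \<le> pi\<close> in terms of the Lipschitz
  constant only. Then \<open>\<phi> z = exp (- \<i> V (Ln ((1 + cnj \<zeta> z) / (1 - cnj \<zeta> z))))\<close>, up to a
  constant phase, does the job.
\<close>

section \<open>Gaussian smoothing of Lipschitz functions\<close>

lemma integral_of_real_complex:
  "integral S (\<lambda>x. complex_of_real (f x)) = of_real (integral S f)"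
proof (cases "f integrable_on S")
  case True
  then show ?thesis
    by (intro integral_unique has_integral_of_real integrable_integral)
next
  case False
  have "\<not> (\<lambda>x. complex_of_real (f x)) integrable_on S"
    using integrable_linear[OF _ bounded_linear_Re, of "\<lambda>x. complex_of_real (f x)" S] False
    by (auto simp: o_def)
  with False show ?thesis by (simp add: not_integrable_integral)
qed

lemma integral_reflect_shift_real:
  "integral {x-R..x+R} (\<lambda>\<tau>. k (x - \<tau>)) = integral {-R..R} (k::real \<Rightarrow> 'a::banach)"
proof -
  have "integral {x-R..x+R} (\<lambda>\<tau>. k (x - \<tau>)) = integral {-(x+R)..-(x-R)} (\<lambda>\<tau>. k (x - (-\<tau>)))"
    by (rule Henstock_Kurzweil_Integration.integral_reflect_real[symmetric])
  also have "\<dots> = integral {-R-x..R-x} (k \<circ> (+) x)"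
    by (simp add: o_def algebra_simps)
  also have "\<dots> = integral {-R..R} k"
    by (subst integral_shift_Icc_real) simp
  finally show ?thesis .
qed

definition gauss_kernel :: "real \<Rightarrow> complex \<Rightarrow> complex" where
  "gauss_kernel a w = exp (- of_real a * w\<^sup>2)"

lemma continuous_on_gauss_kernel [continuous_intros]:
  "continuous_on S f \<Longrightarrow> continuous_on S (\<lambda>x. gauss_kernel a (f x))"
  unfolding gauss_kernel_def by (intro continuous_intros)

lemma norm_gauss_kernel:
  "norm (gauss_kernel a (of_real u + \<i> * of_real y)) = exp (- a * u\<^sup>2 + a * y\<^sup>2)"
  unfolding gauss_kernel_def norm_exp_eq_Re by (simp add: power2_eq_square algebra_simps)

lemma gauss_kernel_of_real: "gauss_kernel a (of_real u) = of_real (exp (- a * u\<^sup>2))"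
  unfolding gauss_kernel_def by (simp flip: exp_of_real)

lemma cnj_gauss_kernel:
  "cnj (gauss_kernel a (of_real u + \<i> * of_real y)) = gauss_kernel a (of_real (- u) + \<i> * of_real y)"
  unfolding gauss_kernel_def exp_cnj by (simp add: power2_eq_square algebra_simps)

lemma Im_integral_gauss_kernel_horizontal:
  "Im (integral {-R..R} (\<lambda>u. gauss_kernel a (of_real u + \<i> * of_real y))) = 0"
proof -
  let ?f = "\<lambda>u. gauss_kernel a (of_real u + \<i> * of_real y)"
  have "cnj (integral {-R..R} ?f) = integral {-R..R} (\<lambda>u. ?f (- u))"
    by (simp only: integral_cnj cnj_gauss_kernel)
  also have "\<dots> = integral {-R..R} ?f"
    using Henstock_Kurzweil_Integration.integral_reflect_real[of R "-R" ?f] by (simp only: minus_minus)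
  finally have "cnj (integral {-R..R} ?f) = integral {-R..R} ?f" .
  then have "Im (cnj (integral {-R..R} ?f)) = Im (integral {-R..R} ?f)" by (rule arg_cong)
  then show ?thesis by simp
qed

lemma has_integral_abs_times_gaussian:
  fixes a R :: real
  assumes a: "0 < a" and R: "0 \<le> R"
  shows "((\<lambda>u. \<bar>u\<bar> * exp (- a * u\<^sup>2)) has_integral (1 - exp (- a * R\<^sup>2)) / a) {-R..R}"
proof -
  have right: "((\<lambda>u. - exp (- a * u\<^sup>2) / (2 * a)) has_vector_derivative u * exp (- a * u\<^sup>2))
      (at u within S)" for u S
    using a by (auto intro!: derivative_eq_intros
        simp: has_real_derivative_iff_has_vector_derivative[symmetric] field_simps)
  have left: "((\<lambda>u. exp (- a * u\<^sup>2) / (2 * a)) has_vector_derivative - u * exp (- a * u\<^sup>2))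
      (at u within S)" for u S
    using a by (auto intro!: derivative_eq_intros
        simp: has_real_derivative_iff_has_vector_derivative[symmetric] field_simps)
  have "((\<lambda>u. u * exp (- a * u\<^sup>2)) has_integral (1 - exp (- a * R\<^sup>2)) / (2 * a)) {0..R}"
    using fundamental_theorem_of_calculus[OF R right] a by (simp add: field_simps)
  then have pos: "((\<lambda>u. \<bar>u\<bar> * exp (- a * u\<^sup>2)) has_integral (1 - exp (- a * R\<^sup>2)) / (2 * a)) {0..R}"
    by (rule has_integral_eq[rotated]) simp
  have "((\<lambda>u. - u * exp (- a * u\<^sup>2)) has_integral (1 - exp (- a * R\<^sup>2)) / (2 * a)) {-R..0}"
    using fundamental_theorem_of_calculus[of "-R" 0, OF _ left] R a by (simp add: field_simps)
  then have neg: "((\<lambda>u. \<bar>u\<bar> * exp (- a * u\<^sup>2)) has_integral (1 - exp (- a * R\<^sup>2)) / (2 * a)) {-R..0}"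
    by (rule has_integral_eq[rotated]) simp
  from has_integral_combine[OF _ _ neg pos] R show ?thesis
    by (simp add: field_simps)
qed

lemma gaussian_integral_lower_bound:
  fixes b R :: real
  assumes b: "1 \<le> b" and R: "1 \<le> R"
  shows "2 / (b * exp 1) \<le> integral {-R..R} (\<lambda>u. exp (- b\<^sup>2 * u\<^sup>2))"
proof -
  have "2 / (b * exp 1) = integral {-(1/b)..1/b} (\<lambda>u. exp (-1))"
    using b by (simp add: exp_minus field_simps)
  also have "\<dots> \<le> integral {-(1/b)..1/b} (\<lambda>u. exp (- b\<^sup>2 * u\<^sup>2))"
  proof (rule integral_le)
    fix u assume "u \<in> {-(1/b)..1/b}"
    then have "\<bar>u\<bar> \<le> 1/b" by auto
    then have "\<bar>u\<bar> * b \<le> 1"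
      using b by (simp add: field_simps)
    then have "(\<bar>u\<bar> * b)\<^sup>2 \<le> 1\<^sup>2"
      using b by (intro power_mono) auto
    then show "exp (-1) \<le> exp (- b\<^sup>2 * u\<^sup>2)"
      by (simp add: power_mult_distrib mult_ac)
  qed (auto intro!: integrable_continuous_interval continuous_intros)
  also have "\<dots> \<le> integral {-R..R} (\<lambda>u. exp (- b\<^sup>2 * u\<^sup>2))"
  proof (rule integral_subset_le)
    have "1 / b \<le> 1" using b by simp
    then have "1 / b \<le> R" using R by linarith
    then show "{-(1/b)..1/b} \<subseteq> {-R..R}" by auto
  qed (auto intro!: integrable_continuous_interval continuous_intros)
  finally show ?thesis .
qed

definition gauss_conv :: "real \<Rightarrow> real \<Rightarrow> real \<Rightarrow> (real \<Rightarrow> real) \<Rightarrow> complex \<Rightarrow> complex" where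
  "gauss_conv a A B q w = integral {A..B} (\<lambda>\<tau>. of_real (q \<tau>) * gauss_kernel a (w - of_real \<tau>))"

lemma holomorphic_gauss_conv:
  assumes q: "continuous_on {A..B} q"
  shows "gauss_conv a A B q holomorphic_on UNIV"
proof -
  let ?f' = "\<lambda>w \<tau>. of_real (q \<tau>) * (gauss_kernel a (w - of_real \<tau>) * (- of_real a * (2 * (w - of_real \<tau>))))"
  have "(\<lambda>w. integral (cbox A B) (\<lambda>\<tau>. of_real (q \<tau>) * gauss_kernel a (w - of_real \<tau>)))
      holomorphic_on UNIV"
  proof (rule leibniz_rule_holomorphic[where fx = ?f'])
    fix w :: complex and \<tau> :: real
    show "((\<lambda>w. of_real (q \<tau>) * gauss_kernel a (w - of_real \<tau>)) has_field_derivative ?f' w \<tau>)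
        (at w within UNIV)"
      unfolding gauss_kernel_def by (auto intro!: derivative_eq_intros)
  next
    fix w :: complex
    show "(\<lambda>\<tau>. of_real (q \<tau>) * gauss_kernel a (w - of_real \<tau>)) integrable_on cbox A B"
      unfolding cbox_interval by (intro integrable_continuous_interval continuous_intros q)
  next
    have "continuous_on (UNIV \<times> cbox A B) (\<lambda>p. q (snd p))"
      by (rule continuous_on_compose2[OF q continuous_on_snd]) (auto simp: cbox_interval)
    then show "continuous_on (UNIV \<times> cbox A B) (\<lambda>(w, \<tau>). ?f' w \<tau>)"
      unfolding case_prod_unfold by (intro continuous_intros)
  qed auto
  then show ?thesis
    unfolding gauss_conv_def[abs_def] cbox_interval .
qed

lemma gauss_conv_of_real:
  "gauss_conv a A B q (of_real x) = of_real (integral {A..B} (\<lambda>\<tau>. q \<tau> * exp (- a * (x - \<tau>)\<^sup>2)))"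
proof -
  have "of_real (q \<tau>) * gauss_kernel a (of_real x - of_real \<tau>) = of_real (q \<tau> * exp (- a * (x - \<tau>)\<^sup>2))"
    for \<tau>
    by (subst of_real_diff[symmetric], subst gauss_kernel_of_real) simp
  then show ?thesis
    unfolding gauss_conv_def by (simp only: integral_of_real_complex)
qed

lemma gauss_conv_split:
  assumes q: "continuous_on UNIV q" and supp: "\<And>x. x \<notin> {A..B} \<Longrightarrow> q x = 0"
    and sub: "{A..B} \<subseteq> {Re w - R..Re w + R}"
  shows "gauss_conv a A B q w =
      integral {Re w - R..Re w + R} (\<lambda>\<tau>. of_real (q \<tau> - q (Re w)) * gauss_kernel a (w - of_real \<tau>))
      + of_real (q (Re w)) * integral {-R..R} (\<lambda>u. gauss_kernel a (of_real u + \<i> * of_real (Im w)))"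
proof -
  define x where "x = Re w"
  have w: "w - of_real \<tau> = of_real (x - \<tau>) + \<i> * of_real (Im w)" for \<tau>
    unfolding x_def by (simp add: complex_eq_iff)
  have qc: "continuous_on S q" for S
    using q continuous_on_subset by blast
  let ?F = "\<lambda>\<tau>. of_real (q \<tau>) * gauss_kernel a (w - of_real \<tau>)"
  let ?G = "\<lambda>\<tau>. gauss_kernel a (w - of_real \<tau>)"
  let ?f = "\<lambda>\<tau>. of_real (q \<tau> - q x) * gauss_kernel a (w - of_real \<tau>)"
  have "?F integrable_on {A..B}"
    by (intro integrable_continuous_interval continuous_intros qc)
  then have "(?F has_integral gauss_conv a A B q w) {x - R..x + R}"
    unfolding gauss_conv_def x_def
    by (rule has_integral_on_superset[OF integrable_integral _ sub]) (simp add: supp)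
  then have "gauss_conv a A B q w = integral {x - R..x + R} (\<lambda>\<tau>. ?f \<tau> + of_real (q x) * ?G \<tau>)"
    by (simp add: integral_unique algebra_simps)
  also have "\<dots> = integral {x - R..x + R} ?f + of_real (q x) * integral {x - R..x + R} ?G"
    by (simp add: integral_add integrable_continuous_interval continuous_intros qc)
  also have "integral {x - R..x + R} ?G = integral {-R..R} (\<lambda>u. gauss_kernel a (of_real u + \<i> * of_real (Im w)))"
    unfolding w by (rule integral_reflect_shift_real)
  finally show ?thesis
    unfolding x_def .
qed

lemma norm_integral_gauss_kernel_lipschitz:
  assumes lip: "L-lipschitz_on UNIV q" and a: "0 < a" and R: "0 \<le> R"
  shows "norm (integral {Re w - R..Re w + R}
      (\<lambda>\<tau>. of_real (q \<tau> - q (Re w)) * gauss_kernel a (w - of_real \<tau>))) \<le> L * exp (a * (Im w)\<^sup>2) / a"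
proof -
  define x where "x = Re w"
  define y where "y = Im w"
  have w: "w - of_real \<tau> = of_real (x - \<tau>) + \<i> * of_real y" for \<tau>
    unfolding x_def y_def by (simp add: complex_eq_iff)
  have L: "0 \<le> L"
    using lipschitz_on_nonneg[OF lip] .
  have q_diff: "\<bar>q \<tau> - q x\<bar> \<le> L * \<bar>x - \<tau>\<bar>" for \<tau>
    using lipschitz_onD[OF lip, of \<tau> x] by (simp add: dist_real_def abs_minus_commute)
  have qc: "continuous_on S q" for S
    using lipschitz_on_continuous_on[OF lip] continuous_on_subset by blast
  let ?f = "\<lambda>\<tau>. of_real (q \<tau> - q x) * gauss_kernel a (w - of_real \<tau>)"
  let ?g = "\<lambda>\<tau>. L * exp (a * y\<^sup>2) * (\<bar>x - \<tau>\<bar> * exp (- a * (x - \<tau>)\<^sup>2))"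
  have "norm (integral {x - R..x + R} ?f) \<le> integral {x - R..x + R} ?g"
  proof (rule integral_norm_bound_integral)
    fix \<tau>
    have "norm (?f \<tau>) = \<bar>q \<tau> - q x\<bar> * exp (- a * (x - \<tau>)\<^sup>2 + a * y\<^sup>2)"
      unfolding w norm_mult norm_gauss_kernel norm_of_real by simp
    also have "\<dots> \<le> (L * \<bar>x - \<tau>\<bar>) * exp (- a * (x - \<tau>)\<^sup>2 + a * y\<^sup>2)"
      using q_diff by (intro mult_right_mono) auto
    also have "\<dots> = ?g \<tau>"
      by (subst exp_add) (simp add: mult_ac)
    finally show "norm (?f \<tau>) \<le> ?g \<tau>" .
  qed (intro integrable_continuous_interval continuous_intros qc)+
  also have "\<dots> = L * exp (a * y\<^sup>2) * integral {-R..R} (\<lambda>u. \<bar>u\<bar> * exp (- a * u\<^sup>2))"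
    using integral_reflect_shift_real[where k = "\<lambda>u. \<bar>u\<bar> * exp (- a * u\<^sup>2)"] by simp
  also have "\<dots> = L * exp (a * y\<^sup>2) * ((1 - exp (- a * R\<^sup>2)) / a)"
    using has_integral_abs_times_gaussian[OF a R] by (simp add: integral_unique)
  also have "\<dots> \<le> L * exp (a * y\<^sup>2) * (1 / a)"
    using a L by (intro mult_left_mono divide_right_mono) auto
  finally show ?thesis
    unfolding x_def y_def by simp
qed

lemma Im_gauss_conv_le:
  assumes lip: "L-lipschitz_on UNIV q" and supp: "\<And>x. x \<notin> {A..B} \<Longrightarrow> q x = 0" and a: "0 < a"
  shows "\<bar>Im (gauss_conv a A B q w)\<bar> \<le> L * exp (a * (Im w)\<^sup>2) / a"
proof -
  define R where "R = \<bar>Re w - A\<bar> + \<bar>Re w - B\<bar>"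
  have R: "0 \<le> R" and sub: "{A..B} \<subseteq> {Re w - R..Re w + R}"
    unfolding R_def by auto
  let ?I = "integral {Re w - R..Re w + R}
      (\<lambda>\<tau>. of_real (q \<tau> - q (Re w)) * gauss_kernel a (w - of_real \<tau>))"
  have "Im (gauss_conv a A B q w) = Im ?I"
    using gauss_conv_split[OF lipschitz_on_continuous_on[OF lip] supp sub]
      Im_integral_gauss_kernel_horizontal[of R a "Im w"] by simp
  also have "\<bar>Im ?I\<bar> \<le> norm ?I"
    by (rule abs_Im_le_cmod)
  also have "\<dots> \<le> L * exp (a * (Im w)\<^sup>2) / a"
    by (rule norm_integral_gauss_kernel_lipschitz[OF lip a R])
  finally show ?thesis .
qed

lemma gauss_conv_of_real_approx:
  assumes lip: "L-lipschitz_on UNIV q" and supp: "\<And>x. x \<notin> {A..B} \<Longrightarrow> q x = 0" and a: "0 < a"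
    and x: "x \<in> {A..B}" and R: "B - A \<le> R"
  shows "\<bar>Re (gauss_conv a A B q (of_real x)) - q x * integral {-R..R} (\<lambda>u. exp (- a * u\<^sup>2))\<bar> \<le> L / a"
proof -
  have sub: "{A..B} \<subseteq> {Re (of_real x) - R..Re (of_real x) + R}"
    using x R by auto
  let ?I = "integral {x - R..x + R} (\<lambda>\<tau>. of_real (q \<tau> - q x) * gauss_kernel a (of_real x - of_real \<tau>))"
  have "integral {-R..R} (\<lambda>u. gauss_kernel a (of_real u + \<i> * of_real (Im (of_real x))))
      = of_real (integral {-R..R} (\<lambda>u. exp (- a * u\<^sup>2)))"
    by (simp add: gauss_kernel_of_real integral_of_real_complex)
  then have "Re (gauss_conv a A B q (of_real x)) - q x * integral {-R..R} (\<lambda>u. exp (- a * u\<^sup>2)) = Re ?I"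
    using gauss_conv_split[OF lipschitz_on_continuous_on[OF lip] supp sub] by simp
  also have "\<bar>Re ?I\<bar> \<le> norm ?I"
    by (rule abs_Re_le_cmod)
  also have "\<dots> \<le> L / a"
    using norm_integral_gauss_kernel_lipschitz[OF lip a, of R "of_real x"] x R by simp
  finally show ?thesis .
qed

lemma divide_gaussian_mass_le:
  fixes b R E :: real
  assumes b: "1 \<le> b" and R: "1 \<le> R" and E: "0 \<le> E"
  shows "E / b\<^sup>2 / integral {-R..R} (\<lambda>u. exp (- b\<^sup>2 * u\<^sup>2)) \<le> E * exp 1 / (2 * b)"
proof -
  define c where "c = integral {-R..R} (\<lambda>u. exp (- b\<^sup>2 * u\<^sup>2))"
  have "b\<^sup>2 * (2 / (b * exp 1)) \<le> b\<^sup>2 * c"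
    unfolding c_def using gaussian_integral_lower_bound[OF b R] by (intro mult_left_mono) auto
  moreover have "b\<^sup>2 * (2 / (b * exp 1)) = 2 * b / exp 1"
    using b by (simp add: power2_eq_square field_simps)
  ultimately have bc: "2 * b / exp 1 \<le> b\<^sup>2 * c"
    by simp
  moreover have pos: "0 < 2 * b / exp 1"
    using b by simp
  ultimately have "0 < b\<^sup>2 * c"
    by linarith
  then have "0 < b\<^sup>2 * c * (2 * b / exp 1)"
    using pos by (rule mult_pos_pos)
  then have "E / (b\<^sup>2 * c) \<le> E / (2 * b / exp 1)"
    using divide_left_mono[OF bc E] by simp
  then show ?thesis
    unfolding c_def[symmetric] by (simp add: field_simps)
qed

text \<open>Subtracting
  \<open>q (Re w)\<close> inside the convolution leaves a real Gaussian integral, so the error on the real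
  line and \<open>Im V\<close> on a horizontal strip are both controlled by the Lipschitz constant alone.\<close>

lemma gauss_smoothing:
  fixes q :: "real \<Rightarrow> real" and b :: real
  assumes lip: "L-lipschitz_on UNIV q" and supp: "\<And>x. x \<notin> {A..B} \<Longrightarrow> q x = 0"
    and R: "B - A \<le> R" "1 \<le> R" and b: "1 \<le> b"
  obtains V where "V holomorphic_on UNIV" and "\<And>x. Im (V (of_real x)) = 0"
    and "\<And>x. x \<in> {A..B} \<Longrightarrow> \<bar>Re (V (of_real x)) - q x\<bar> \<le> L * exp 1 / (2 * b)"
    and "\<And>w. \<bar>Im w\<bar> \<le> pi \<Longrightarrow> \<bar>Im (V w)\<bar> \<le> L * exp (b\<^sup>2 * pi\<^sup>2) * exp 1 / (2 * b)"
proof -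
  define a where "a = b\<^sup>2"
  define c where "c = integral {-R..R} (\<lambda>u. exp (- a * u\<^sup>2))"
  have a: "0 < a"
    using b unfolding a_def by simp
  have L: "0 \<le> L"
    using lipschitz_on_nonneg[OF lip] .
  have "2 / (b * exp 1) \<le> c"
    unfolding c_def a_def using gaussian_integral_lower_bound[OF b R(2)] by simp
  moreover have "0 < 2 / (b * exp 1)"
    using b by simp
  ultimately have c: "0 < c"
    by linarith
  have scale: "E / a / c \<le> E * exp 1 / (2 * b)" if "0 \<le> E" for E
    using divide_gaussian_mass_le[OF b R(2) that] unfolding a_def c_def .
  define V where "V w = gauss_conv a A B q w / of_real c" for w
  show ?thesis
  proof (rule that)
    have "continuous_on {A..B} q"
      using lipschitz_on_continuous_on[OF lip] continuous_on_subset by blast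
    then show "V holomorphic_on UNIV"
      unfolding V_def[abs_def] using c by (intro holomorphic_intros holomorphic_gauss_conv) auto
  next
    show "Im (V (of_real x)) = 0" for x
      unfolding V_def gauss_conv_of_real by (simp add: Im_divide_of_real)
  next
    fix x assume x: "x \<in> {A..B}"
    have "Re (V (of_real x)) - q x = (Re (gauss_conv a A B q (of_real x)) - q x * c) / c"
      using c by (simp add: V_def Re_divide_of_real field_simps)
    also have "\<bar>\<dots>\<bar> \<le> L / a / c"
      unfolding abs_divide
      using divide_right_mono[OF gauss_conv_of_real_approx[OF lip supp a x R(1), folded c_def], of c] c
      by simp
    also have "\<dots> \<le> L * exp 1 / (2 * b)"
      using scale[OF L] by simp
    finally show "\<bar>Re (V (of_real x)) - q x\<bar> \<le> L * exp 1 / (2 * b)" .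
  next
    fix w assume w: "\<bar>Im w\<bar> \<le> pi"
    have "\<bar>Im (V w)\<bar> = \<bar>Im (gauss_conv a A B q w)\<bar> / c"
      using c by (simp add: V_def Im_divide_of_real abs_divide)
    also have "\<dots> \<le> L * exp (a * (Im w)\<^sup>2) / a / c"
      using divide_right_mono[OF Im_gauss_conv_le[where A = A and B = B and w = w, OF lip supp a], of c] c
      by simp
    also have "\<dots> \<le> L * exp (a * pi\<^sup>2) / a / c"
    proof -
      have "(Im w)\<^sup>2 \<le> pi\<^sup>2"
        using w by (metis abs_le_square_iff abs_of_nonneg pi_ge_zero power2_abs)
      then show ?thesis
        using L a c by (intro divide_right_mono mult_left_mono) auto
    qed
    also have "\<dots> \<le> L * exp (b\<^sup>2 * pi\<^sup>2) * exp 1 / (2 * b)"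
      using scale L unfolding a_def by simp
    finally show "\<bar>Im (V w)\<bar> \<le> L * exp (b\<^sup>2 * pi\<^sup>2) * exp 1 / (2 * b)" .
  qed
qed

section \<open>Bloch functions along a radius\<close>

text \<open>\<open>tanh_half s = tanh (s / 2)\<close> is the point of \<open>[0, 1)\<close> at hyperbolic distance \<open>s\<close>
  from \<open>0\<close>; its inverse is \<open>r \<mapsto> ln ((1 + r) / (1 - r))\<close>.\<close>

definition tanh_half :: "real \<Rightarrow> real" where
  "tanh_half s = (exp s - 1) / (exp s + 1)"

lemma tanh_half_0 [simp]: "tanh_half 0 = 0"
  unfolding tanh_half_def by simp

lemma abs_tanh_half_less_1: "\<bar>tanh_half s\<bar> < 1"
proof -
  have "\<bar>exp s - 1\<bar> < exp s + 1"
    using exp_gt_zero[of s] by linarith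
  then show ?thesis
    unfolding tanh_half_def using exp_gt_zero[of s] by (simp add: abs_divide divide_less_eq)
qed

lemma of_real_tanh_half:
  "(exp (complex_of_real s) - 1) / (exp (complex_of_real s) + 1) = of_real (tanh_half s)"
  unfolding tanh_half_def exp_of_real by simp

lemma tanh_half_derivative: "2 * exp s / (exp s + 1)\<^sup>2 = (1 - (tanh_half s)\<^sup>2) / 2"
proof -
  have "exp s + 1 \<noteq> 0"
    using exp_gt_zero[of s] by linarith
  then have "1 - (tanh_half s)\<^sup>2 = ((exp s + 1)\<^sup>2 - (exp s - 1)\<^sup>2) / (exp s + 1)\<^sup>2"
    unfolding tanh_half_def power_divide by (simp add: diff_divide_distrib)
  also have "(exp s + 1)\<^sup>2 - (exp s - 1)\<^sup>2 = 4 * exp s"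
    by (simp add: power2_eq_square algebra_simps)
  finally show ?thesis
    by simp
qed

lemma tanh_half_ln:
  assumes "\<bar>r\<bar> < 1"
  shows "tanh_half (ln ((1 + r) / (1 - r))) = r"
proof -
  have "0 < (1 + r) / (1 - r)" and "1 - r \<noteq> 0"
    using assms by auto
  then show ?thesis
    unfolding tanh_half_def by (simp add: field_simps)
qed

lemma has_field_derivative_tanh_half_rotated:
  fixes z \<zeta> :: complex
  assumes "exp z + 1 \<noteq> 0"
  shows "((\<lambda>z. (exp z - 1) / (exp z + 1) * \<zeta>) has_field_derivative 2 * exp z / (exp z + 1)\<^sup>2 * \<zeta>)
    (at z within S)"
proof -
  have "((\<lambda>z. (exp z - 1) / (exp z + 1) * \<zeta>) has_field_derivative
      (exp z * (exp z + 1) - (exp z - 1) * exp z) / (exp z + 1)\<^sup>2 * \<zeta>) (at z within S)"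
    using assms by (auto intro!: derivative_eq_intros simp: power2_eq_square algebra_simps)
  moreover have "exp z * (exp z + 1) - (exp z - 1) * exp z = 2 * exp z"
    by (simp add: algebra_simps)
  ultimately show ?thesis
    by simp
qed

lemma has_field_derivative_radius_tanh_half:
  assumes h: "h holomorphic_on unit_disc" and \<zeta>: "norm \<zeta> = 1" and z: "z \<in> \<real>"
  shows "((\<lambda>z. h ((exp z - 1) / (exp z + 1) * \<zeta>)) has_field_derivative
     deriv h ((exp z - 1) / (exp z + 1) * \<zeta>) * (2 * exp z / (exp z + 1)\<^sup>2 * \<zeta>)) (at z within \<real>)"
proof -
  obtain s where s: "z = of_real s"
    using z Reals_cases by blast
  have "exp z + 1 \<noteq> 0"
  proof
    assume "exp z + 1 = 0"
    then have "Re (exp z + 1) = 0"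
      by simp
    moreover have "Re (exp z + 1) = exp s + 1"
      unfolding s exp_of_real by simp
    ultimately show False
      using exp_gt_zero[of s] by linarith
  qed
  then have g: "((\<lambda>z. (exp z - 1) / (exp z + 1) * \<zeta>) has_field_derivative
      2 * exp z / (exp z + 1)\<^sup>2 * \<zeta>) (at z within \<real>)"
    by (rule has_field_derivative_tanh_half_rotated)
  have "of_real (tanh_half s) * \<zeta> \<in> unit_disc"
    using abs_tanh_half_less_1[of s] \<zeta> by (simp add: norm_mult)
  then have "(h has_field_derivative deriv h (of_real (tanh_half s) * \<zeta>)) (at (of_real (tanh_half s) * \<zeta>))"
    using holomorphic_derivI[OF h open_ball] by blast
  then show ?thesis
    using DERIV_chain'[OF g] unfolding s of_real_tanh_half by blast
qed

lemma norm_deriv_radius_tanh_half_le: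
  assumes bloch: "\<And>z. z \<in> unit_disc \<Longrightarrow> (1 - (norm z)\<^sup>2) * norm (deriv h z) \<le> K"
    and \<zeta>: "norm \<zeta> = 1" and z: "z \<in> \<real>"
  shows "norm (deriv h ((exp z - 1) / (exp z + 1) * \<zeta>) * (2 * exp z / (exp z + 1)\<^sup>2 * \<zeta>)) \<le> K / 2"
proof -
  obtain s where s: "z = of_real s"
    using z Reals_cases by blast
  let ?w = "of_real (tanh_half s) * \<zeta>"
  have "2 * exp z / (exp z + 1)\<^sup>2 = (of_real ((1 - (tanh_half s)\<^sup>2) / 2) :: complex)"
    unfolding s exp_of_real tanh_half_derivative[symmetric] by simp
  moreover have "(exp z - 1) / (exp z + 1) * \<zeta> = ?w"
    unfolding s of_real_tanh_half ..
  ultimately have e: "deriv h ((exp z - 1) / (exp z + 1) * \<zeta>) * (2 * exp z / (exp z + 1)\<^sup>2 * \<zeta>)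
      = deriv h ?w * (of_real ((1 - (tanh_half s)\<^sup>2) / 2) * \<zeta>)"
    by (simp only:)
  have "0 \<le> (1 - (tanh_half s)\<^sup>2) / 2"
    using abs_tanh_half_less_1[of s] by (simp add: abs_square_less_1 less_imp_le)
  then have "norm (deriv h ((exp z - 1) / (exp z + 1) * \<zeta>) * (2 * exp z / (exp z + 1)\<^sup>2 * \<zeta>))
      = (1 - (norm ?w)\<^sup>2) * norm (deriv h ?w) / 2"
    unfolding e norm_mult norm_of_real \<zeta> by simp
  also have "\<dots> \<le> K / 2"
    using bloch[of ?w] abs_tanh_half_less_1[of s] \<zeta> by (simp add: norm_mult divide_right_mono)
  finally show ?thesis .
qed

text \<open>The derivative of \<open>tanh (s / 2)\<close> is \<open>(1 - tanh (s / 2)\<^sup>2) / 2\<close>, exactly the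
  factor in the Bloch seminorm.\<close>

lemma bloch_lipschitz_on_radius:
  assumes h: "h holomorphic_on unit_disc"
    and bloch: "\<And>z. z \<in> unit_disc \<Longrightarrow> (1 - (norm z)\<^sup>2) * norm (deriv h z) \<le> K"
    and \<zeta>: "norm \<zeta> = 1"
  shows "(K / 2)-lipschitz_on UNIV (\<lambda>s. h (of_real (tanh_half s) * \<zeta>))"
proof (rule lipschitz_onI)
  have "norm (deriv h 0) \<le> K"
    using bloch[of 0] by simp
  then show "0 \<le> K / 2"
    using norm_ge_zero[of "deriv h 0"] by linarith
next
  fix x y :: real
  let ?H = "\<lambda>z. h ((exp z - 1) / (exp z + 1) * \<zeta>)"
  let ?H' = "\<lambda>z. deriv h ((exp z - 1) / (exp z + 1) * \<zeta>) * (2 * exp z / (exp z + 1)\<^sup>2 * \<zeta>)"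
  have "norm (?H (of_real x) - ?H (of_real y)) \<le> K / 2 * norm (of_real x - of_real y :: complex)"
    by (rule field_differentiable_bound[OF convex_Reals, of ?H ?H'])
      (use has_field_derivative_radius_tanh_half[OF h \<zeta>] norm_deriv_radius_tanh_half_le[OF bloch \<zeta>]
        in auto)
  then show "dist (h (of_real (tanh_half x) * \<zeta>)) (h (of_real (tanh_half y) * \<zeta>)) \<le> K / 2 * dist x y"
    unfolding of_real_tanh_half dist_norm by (simp flip: of_real_diff)
qed

section \<open>Correcting the argument of \<open>exp h\<close> along a radius\<close>

text \<open>Beyond \<open>T\<close>, \<open>cutoff p T\<close> falls linearly from \<open>p T\<close> to \<open>0\<close> on \<open>[T, T + max 1 \<bar>p T\<bar>]\<close>:
  compact support at the cost of \<open>1\<close> in the Lipschitz constant.\<close>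

definition cutoff :: "(real \<Rightarrow> real) \<Rightarrow> real \<Rightarrow> real \<Rightarrow> real" where
  "cutoff p T s = p (max (min s T) 0) + p T * max 0 (1 - (max s T - T) / max 1 \<bar>p T\<bar>) - p T"

lemma cutoff_eq:
  assumes "0 \<le> s" "s \<le> T"
  shows "cutoff p T s = p s"
  unfolding cutoff_def using assms by (simp add: max_def min_def)

lemma cutoff_eq_0:
  assumes p0: "p 0 = 0" and T: "0 \<le> T" and s: "s \<notin> {0..T + max 1 \<bar>p T\<bar>}"
  shows "cutoff p T s = 0"
proof (cases "s < 0")
  case True
  then show ?thesis
    unfolding cutoff_def using T p0 by (simp add: max_def min_def)
next
  case False
  define D where "D = max 1 \<bar>p T\<bar>"
  have D: "1 \<le> D"
    unfolding D_def by simp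
  have sT: "T + D < s"
    using s False unfolding D_def by auto
  then have "1 < (max s T - T) / D"
    using D T by (simp add: max_def field_simps)
  moreover have "max (min s T) 0 = T"
    using sT T D by (simp add: max_def min_def)
  ultimately show ?thesis
    unfolding cutoff_def D_def[symmetric] by simp
qed

lemma lipschitz_on_clamp: "1-lipschitz_on UNIV (\<lambda>s::real. max (min s T) 0)"
  by (rule lipschitz_onI) (auto simp: dist_real_def max_def min_def)

lemma lipschitz_on_ramp:
  fixes P D T :: real
  assumes D: "1 \<le> D" and P: "\<bar>P\<bar> \<le> D"
  shows "1-lipschitz_on UNIV (\<lambda>s. P * max 0 (1 - (max s T - T) / D))"
proof (rule lipschitz_onI)
  fix x y :: real
  let ?u = "1 - (max x T - T) / D" and ?v = "1 - (max y T - T) / D"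
  have max0: "\<bar>max 0 u - max 0 v\<bar> \<le> \<bar>u - v\<bar>" for u v :: real
    by (simp add: max_def)
  have maxT: "\<bar>max x T - max y T\<bar> \<le> \<bar>x - y\<bar>"
    by (cases "x \<le> T"; cases "y \<le> T") auto
  have "\<bar>P * max 0 ?u - P * max 0 ?v\<bar> = \<bar>P\<bar> * \<bar>max 0 ?u - max 0 ?v\<bar>"
    by (simp only: right_diff_distrib[symmetric] abs_mult)
  also have "\<dots> \<le> \<bar>P\<bar> * \<bar>?u - ?v\<bar>"
    by (intro mult_left_mono max0) simp
  also have "?u - ?v = (max y T - max x T) / D"
    by (simp add: diff_divide_distrib)
  also have "\<bar>(max y T - max x T) / D\<bar> = \<bar>max x T - max y T\<bar> / D"
    using D by (simp add: abs_divide abs_minus_commute)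
  also have "\<bar>P\<bar> * (\<bar>max x T - max y T\<bar> / D) \<le> \<bar>P\<bar> * (\<bar>x - y\<bar> / D)"
    using D by (intro mult_left_mono divide_right_mono maxT) auto
  also have "\<dots> = (\<bar>P\<bar> / D) * \<bar>x - y\<bar>"
    by simp
  also have "\<dots> \<le> 1 * \<bar>x - y\<bar>"
    using D P by (intro mult_right_mono) auto
  finally show "dist (P * max 0 ?u) (P * max 0 ?v) \<le> 1 * dist x y"
    by (simp only: dist_real_def)
qed simp

lemma lipschitz_on_cutoff:
  assumes "L-lipschitz_on UNIV p"
  shows "(L + 1)-lipschitz_on UNIV (cutoff p T)"
proof -
  have p: "L-lipschitz_on (range (\<lambda>s. max (min s T) 0)) p"
    using assms by (rule lipschitz_on_subset) simp
  have "(L * 1 + 1 + 0)-lipschitz_on UNIV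
      (\<lambda>s. p (max (min s T) 0) + p T * max 0 (1 - (max s T - T) / max 1 \<bar>p T\<bar>) - p T)"
    by (intro lipschitz_on_diff lipschitz_on_add lipschitz_on_compose2[OF lipschitz_on_clamp p]
        lipschitz_on_ramp lipschitz_on_constant) auto
  then show ?thesis
    unfolding cutoff_def[abs_def] by (simp only: mult_1_right add_0_right)
qed

lemma cnj_mult_self_unit:
  assumes "norm \<zeta> = 1"
  shows "cnj \<zeta> * \<zeta> = 1"
  using complex_norm_square[of \<zeta>] assms by (simp add: mult.commute)

lemma Re_cayley_pos:
  fixes w :: complex
  assumes w: "norm w < 1"
  shows "0 < Re ((1 + w) / (1 - w))"
proof -
  have "(norm w)\<^sup>2 < 1"
    using w norm_ge_zero[of w] by (simp add: power_less_one_iff abs_square_less_1)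
  then have "(Re w)\<^sup>2 + (Im w)\<^sup>2 < 1"
    by (simp add: cmod_power2)
  moreover have "Re w < 1"
    using w abs_Re_le_cmod[of w] by linarith
  then have "0 < (1 - Re w)\<^sup>2 + (Im w)\<^sup>2"
    by (simp add: add_pos_nonneg)
  moreover have "Re ((1 + w) / (1 - w)) = (1 - ((Re w)\<^sup>2 + (Im w)\<^sup>2)) / ((1 - Re w)\<^sup>2 + (Im w)\<^sup>2)"
    by (simp add: Re_divide power2_eq_square algebra_simps)
  ultimately show ?thesis
    by simp
qed

text \<open>The Cayley map \<open>z \<mapsto> (1 + cnj \<zeta> * z) / (1 - cnj \<zeta> * z)\<close> sends the disc into the right
  half plane and \<open>r * \<zeta>\<close> to \<open>(1 + r) / (1 - r)\<close>; after \<open>Ln\<close>, the disc lies in the strip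
  \<open>\<bar>Im w\<bar> < pi / 2\<close> and the radius through \<open>\<zeta>\<close> is parametrised by the hyperbolic coordinate.\<close>

definition strip_phase :: "(complex \<Rightarrow> complex) \<Rightarrow> complex \<Rightarrow> complex \<Rightarrow> complex" where
  "strip_phase V \<zeta> z = exp (- \<i> * V (Ln ((1 + cnj \<zeta> * z) / (1 - cnj \<zeta> * z))))"

lemma holomorphic_strip_phase:
  assumes V: "V holomorphic_on UNIV" and \<zeta>: "norm \<zeta> = 1"
  shows "strip_phase V \<zeta> holomorphic_on unit_disc"
proof -
  have small: "norm (cnj \<zeta> * z) < 1" if "z \<in> unit_disc" for z
    using that \<zeta> by (simp add: norm_mult)
  have "1 - cnj \<zeta> * z \<noteq> 0" if "z \<in> unit_disc" for z
    using small[OF that] by auto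
  then have cayley: "(\<lambda>z. (1 + cnj \<zeta> * z) / (1 - cnj \<zeta> * z)) holomorphic_on unit_disc"
    by (intro holomorphic_intros) auto
  have "(1 + cnj \<zeta> * z) / (1 - cnj \<zeta> * z) \<notin> \<real>\<^sub>\<le>\<^sub>0" if "z \<in> unit_disc" for z
    using Re_cayley_pos[OF small[OF that]] by (auto simp: complex_nonpos_Reals_iff)
  then have "(\<lambda>z. Ln ((1 + cnj \<zeta> * z) / (1 - cnj \<zeta> * z))) holomorphic_on unit_disc"
    by (rule holomorphic_on_Ln'[OF _ cayley])
  then have "(V \<circ> (\<lambda>z. Ln ((1 + cnj \<zeta> * z) / (1 - cnj \<zeta> * z)))) holomorphic_on unit_disc"
    by (rule holomorphic_on_compose[OF _ holomorphic_on_subset[OF V]]) auto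
  then show ?thesis
    unfolding strip_phase_def[abs_def] by (intro holomorphic_intros) (simp add: o_def)
qed

lemma norm_strip_phase_le:
  assumes strip: "\<And>w. \<bar>Im w\<bar> \<le> pi \<Longrightarrow> \<bar>Im (V w)\<bar> \<le> M"
    and \<zeta>: "norm \<zeta> = 1" and z: "z \<in> unit_disc"
  shows "norm (strip_phase V \<zeta> z) \<le> exp M"
proof -
  let ?w = "(1 + cnj \<zeta> * z) / (1 - cnj \<zeta> * z)"
  have "norm (cnj \<zeta> * z) < 1"
    using z \<zeta> by (simp add: norm_mult)
  then have "?w \<noteq> 0"
    using Re_cayley_pos by force
  then have "\<bar>Im (Ln ?w)\<bar> \<le> pi"
    using mpi_less_Im_Ln Im_Ln_le_pi by (metis abs_le_iff less_eq_real_def minus_less_iff)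
  then have "Im (V (Ln ?w)) \<le> M"
    using strip abs_le_D1 by blast
  then show ?thesis
    unfolding strip_phase_def by simp
qed

lemma strip_phase_radius:
  assumes \<zeta>: "norm \<zeta> = 1" and r: "\<bar>r\<bar> < 1"
  shows "strip_phase V \<zeta> (of_real r * \<zeta>) = exp (- \<i> * V (of_real (ln ((1 + r) / (1 - r)))))"
proof -
  have rot: "cnj \<zeta> * (of_real r * \<zeta>) = of_real r"
    using cnj_mult_self_unit[OF \<zeta>] by (simp add: mult.left_commute)
  have "(1 + cnj \<zeta> * (of_real r * \<zeta>)) / (1 - cnj \<zeta> * (of_real r * \<zeta>)) = of_real ((1 + r) / (1 - r))"
    unfolding rot by simp
  moreover have "0 < (1 + r) / (1 - r)"
    using r by simp
  ultimately show ?thesis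
    unfolding strip_phase_def using Ln_of_real by metis
qed

lemma Re_exp_rotation_ge:
  assumes "\<bar>Im w - c\<bar> \<le> 1"
  shows "exp (Re w) / 2 \<le> Re (exp (- \<i> * of_real c) * exp w)"
proof -
  have "Re (exp (- \<i> * of_real c) * exp w) = exp (Re w) * cos (Im w - c)"
    by (simp add: exp_add[symmetric] Re_exp)
  moreover have "cos (pi / 3) \<le> cos \<bar>Im w - c\<bar>"
    using assms pi_gt3 by (intro cos_monotone_0_pi_le) auto
  then have "1 / 2 \<le> cos (Im w - c)"
    by (simp add: cos_60)
  ultimately show ?thesis
    by simp
qed

lemma lipschitz_entire_approximation:
  fixes L :: real
  obtains M where "\<And>p T. L-lipschitz_on UNIV p \<Longrightarrow> p 0 = 0 \<Longrightarrow> 0 \<le> T \<Longrightarrow>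
    \<exists>V. V holomorphic_on UNIV \<and> (\<forall>x. Im (V (of_real x)) = 0) \<and>
      (\<forall>x\<in>{0..T}. \<bar>Re (V (of_real x)) - p x\<bar> \<le> 1) \<and> (\<forall>w. \<bar>Im w\<bar> \<le> pi \<longrightarrow> \<bar>Im (V w)\<bar> \<le> M)"
proof -
  \<comment> \<open>With this \<open>b\<close> the smoothing error \<open>(L + 1) * exp 1 / (2 * b)\<close> of the cut-off is at most \<open>1\<close>.\<close>
  define b where "b = 2 * (L + 1) + 1"
  have "\<exists>V. V holomorphic_on UNIV \<and> (\<forall>x. Im (V (of_real x)) = 0) \<and>
      (\<forall>x\<in>{0..T}. \<bar>Re (V (of_real x)) - p x\<bar> \<le> 1) \<and>
      (\<forall>w. \<bar>Im w\<bar> \<le> pi \<longrightarrow> \<bar>Im (V w)\<bar> \<le> (L + 1) * exp (b\<^sup>2 * pi\<^sup>2) * exp 1 / (2 * b))"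
    if lip: "L-lipschitz_on UNIV p" and p0: "p 0 = 0" and T: "0 \<le> T" for p T
  proof -
    define D where "D = max 1 \<bar>p T\<bar>"
    have L: "0 \<le> L"
      using lipschitz_on_nonneg[OF lip] .
    have q_lip: "(L + 1)-lipschitz_on UNIV (cutoff p T)"
      by (rule lipschitz_on_cutoff[OF lip])
    have q_supp: "cutoff p T x = 0" if "x \<notin> {0..T + D}" for x
      using cutoff_eq_0[of p T, OF p0 T] that unfolding D_def by blast
    have "1 \<le> D" and b: "1 \<le> b"
      unfolding D_def b_def using L by auto
    then obtain V where V: "V holomorphic_on UNIV" "\<And>x. Im (V (of_real x)) = 0"
      and approx: "\<And>x. x \<in> {0..T + D} \<Longrightarrow> \<bar>Re (V (of_real x)) - cutoff p T x\<bar> \<le> (L + 1) * exp 1 / (2 * b)"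
      and strip: "\<And>w. \<bar>Im w\<bar> \<le> pi \<Longrightarrow> \<bar>Im (V w)\<bar> \<le> (L + 1) * exp (b\<^sup>2 * pi\<^sup>2) * exp 1 / (2 * b)"
      using gauss_smoothing[where A = 0 and B = "T + D" and R = "T + D" and b = b, OF q_lip q_supp] T
      by auto
    have "(L + 1) * exp 1 \<le> (L + 1) * 3"
      using L exp_le by (intro mult_left_mono) auto
    then have "(L + 1) * exp 1 / (2 * b) \<le> 1"
      using b unfolding b_def by simp
    then have "\<bar>Re (V (of_real x)) - p x\<bar> \<le> 1" if "x \<in> {0..T}" for x
      using approx[of x] cutoff_eq[of x T p] that \<open>1 \<le> D\<close> by auto
    then show ?thesis
      using V strip by blast
  qed
  then show ?thesis
    by (rule that)
qed

lemma lipschitz_on_Im_diff: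
  assumes "L-lipschitz_on S f"
  shows "L-lipschitz_on S (\<lambda>x. Im (f x) - c)"
proof (rule lipschitz_onI)
  fix x y assume "x \<in> S" "y \<in> S"
  then have "norm (f x - f y) \<le> L * dist x y"
    using lipschitz_onD[OF assms] by (simp add: dist_norm)
  then show "dist (Im (f x) - c) (Im (f y) - c) \<le> L * dist x y"
    using abs_Im_le_cmod[of "f x - f y"] by (simp add: dist_real_def)
qed (rule lipschitz_on_nonneg[OF assms])

text \<open>If the real entire function \<open>V\<close> follows \<open>Im h\<close> along the radius up to \<open>1\<close>, the strip
  phase built from \<open>V\<close> turns \<open>exp h\<close> into the sector \<open>\<bar>arg\<bar> \<le> 1\<close>, where \<open>cos \<ge> 1 / 2\<close>.\<close>

lemma strip_phase_rotates_radius: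
  assumes V_real: "\<And>x. Im (V (of_real x)) = 0"
    and V_approx: "\<And>s. s \<in> {0..ln ((1 + t) / (1 - t))} \<Longrightarrow>
      \<bar>Re (V (of_real s)) + c - Im (h (of_real (tanh_half s) * \<zeta>))\<bar> \<le> 1"
    and \<zeta>: "norm \<zeta> = 1" and t: "t < 1" and r: "r \<in> {0..t}"
  shows "norm (exp (h (of_real r * \<zeta>)))
    \<le> 2 * Re (strip_phase (\<lambda>w. V w + of_real c) \<zeta> (of_real r * \<zeta>) * exp (h (of_real r * \<zeta>)))"
proof -
  define s where "s = ln ((1 + r) / (1 - r))"
  define a where "a = Re (V (of_real s)) + c"
  have r1: "\<bar>r\<bar> < 1"
    using r t by auto
  have "s \<in> {0..ln ((1 + t) / (1 - t))}"
    unfolding s_def using r t by (auto intro!: frac_le)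
  then have "\<bar>Re (V (of_real s)) + c - Im (h (of_real (tanh_half s) * \<zeta>))\<bar> \<le> 1"
    by (rule V_approx)
  moreover have "tanh_half s = r"
    unfolding s_def by (rule tanh_half_ln[OF r1])
  ultimately have "\<bar>Im (h (of_real r * \<zeta>)) - a\<bar> \<le> 1"
    unfolding a_def by (simp add: abs_minus_commute)
  then have rotated: "exp (Re (h (of_real r * \<zeta>))) / 2 \<le> Re (exp (- \<i> * of_real a) * exp (h (of_real r * \<zeta>)))"
    by (rule Re_exp_rotation_ge)
  have "V (of_real s) + of_real c = of_real a"
    using V_real[of s] unfolding a_def by (simp add: complex_eq_iff)
  then have "strip_phase (\<lambda>w. V w + of_real c) \<zeta> (of_real r * \<zeta>) = exp (- \<i> * of_real a)"
    unfolding strip_phase_radius[OF \<zeta> r1] s_def[symmetric] by (simp only:)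
  then show ?thesis
    using rotated by (simp add: norm_exp_eq_Re)
qed

lemma log_bloch_phase_correction:
  assumes "log_in_bloch g"
  obtains M where "\<And>t \<zeta>. 0 \<le> t \<Longrightarrow> t < 1 \<Longrightarrow> norm \<zeta> = 1 \<Longrightarrow>
    \<exists>\<phi>. \<phi> holomorphic_on unit_disc \<and> (\<forall>z\<in>unit_disc. norm (\<phi> z) \<le> M) \<and>
      (\<forall>r\<in>{0..t}. norm (g (of_real r * \<zeta>)) \<le> 2 * Re (\<phi> (of_real r * \<zeta>) * g (of_real r * \<zeta>)))"
proof -
  obtain h K where h: "h holomorphic_on unit_disc" and exp_h: "\<And>z. z \<in> unit_disc \<Longrightarrow> exp (h z) = g z"
    and bloch: "\<And>z. z \<in> unit_disc \<Longrightarrow> (1 - (norm z)\<^sup>2) * norm (deriv h z) \<le> K"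
    using assms unfolding log_in_bloch_def bloch_def by blast
  obtain M where approx: "\<And>p T. (K / 2)-lipschitz_on UNIV p \<Longrightarrow> p 0 = 0 \<Longrightarrow> 0 \<le> T \<Longrightarrow>
    \<exists>V. V holomorphic_on UNIV \<and> (\<forall>x. Im (V (of_real x)) = 0) \<and>
      (\<forall>x\<in>{0..T}. \<bar>Re (V (of_real x)) - p x\<bar> \<le> 1) \<and> (\<forall>w. \<bar>Im w\<bar> \<le> pi \<longrightarrow> \<bar>Im (V w)\<bar> \<le> M)"
    using lipschitz_entire_approximation by blast
  have "\<exists>\<phi>. \<phi> holomorphic_on unit_disc \<and> (\<forall>z\<in>unit_disc. norm (\<phi> z) \<le> exp M) \<and>
      (\<forall>r\<in>{0..t}. norm (g (of_real r * \<zeta>)) \<le> 2 * Re (\<phi> (of_real r * \<zeta>) * g (of_real r * \<zeta>)))"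
    if t: "0 \<le> t" "t < 1" and \<zeta>: "norm \<zeta> = 1" for t \<zeta>
  proof -
    define p where "p s = Im (h (of_real (tanh_half s) * \<zeta>)) - Im (h 0)" for s
    define T where "T = ln ((1 + t) / (1 - t))"
    have "(K / 2)-lipschitz_on UNIV p"
      unfolding p_def by (intro lipschitz_on_Im_diff bloch_lipschitz_on_radius[OF h bloch \<zeta>])
    moreover have "p 0 = 0" and "0 \<le> T"
      unfolding p_def T_def using t by auto
    ultimately obtain V where V: "V holomorphic_on UNIV" and V_real: "\<And>x. Im (V (of_real x)) = 0"
      and V_approx: "\<And>x. x \<in> {0..T} \<Longrightarrow> \<bar>Re (V (of_real x)) - p x\<bar> \<le> 1"
      and V_strip: "\<And>w. \<bar>Im w\<bar> \<le> pi \<Longrightarrow> \<bar>Im (V w)\<bar> \<le> M"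
      using approx by blast
    define \<phi> where "\<phi> = strip_phase (\<lambda>w. V w + of_real (Im (h 0))) \<zeta>"
    have "\<phi> holomorphic_on unit_disc"
      unfolding \<phi>_def by (intro holomorphic_strip_phase holomorphic_intros V \<zeta>)
    moreover have "norm (\<phi> z) \<le> exp M" if "z \<in> unit_disc" for z
      unfolding \<phi>_def using V_strip by (intro norm_strip_phase_le \<zeta> that) simp
    moreover have "norm (g (of_real r * \<zeta>)) \<le> 2 * Re (\<phi> (of_real r * \<zeta>) * g (of_real r * \<zeta>))"
      if r: "r \<in> {0..t}" for r
    proof -
      have approx': "\<bar>Re (V (of_real s)) + Im (h 0) - Im (h (of_real (tanh_half s) * \<zeta>))\<bar> \<le> 1"
        if "s \<in> {0..T}" for s
        using V_approx[OF that] unfolding p_def by (auto simp: abs_le_iff)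
      have "norm (exp (h (of_real r * \<zeta>))) \<le> 2 * Re (\<phi> (of_real r * \<zeta>) * exp (h (of_real r * \<zeta>)))"
        unfolding \<phi>_def by (rule strip_phase_rotates_radius[where V = V and h = h and c = "Im (h 0)",
            OF V_real approx'[unfolded T_def] \<zeta> t(2) r])
      moreover have "of_real r * \<zeta> \<in> unit_disc"
        using r t \<zeta> by (simp add: norm_mult)
      then have "exp (h (of_real r * \<zeta>)) = g (of_real r * \<zeta>)"
        by (rule exp_h)
      ultimately show ?thesis
        by (simp only:)
    qed
    ultimately show ?thesis
      by blast
  qed
  then show ?thesis
    by (rule that)
qed

lemma is_weight_nonneg: "is_weight \<mu> \<Longrightarrow> z \<in> unit_disc \<Longrightarrow> 0 \<le> \<mu> z"
  unfolding is_weight_def by blast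

lemma is_weight_radial: "is_weight \<mu> \<Longrightarrow> z \<in> unit_disc \<Longrightarrow> \<mu> z = \<mu> (of_real (norm z))"
  unfolding is_weight_def by blast

lemma is_weight_continuous: "is_weight \<mu> \<Longrightarrow> continuous_on unit_disc \<mu>"
  unfolding is_weight_def by blast

lemma analytic_weightE:
  assumes "analytic_weight \<nu>"
  obtains F where "F holomorphic_on unit_disc" and "\<And>z. z \<in> unit_disc \<Longrightarrow> 0 < \<nu> z"
    and "\<And>z. z \<in> unit_disc \<Longrightarrow> F (of_real (norm z)) = of_real (1 / \<nu> z)"
    and "\<And>z. z \<in> unit_disc \<Longrightarrow> norm (F z) \<le> 1 / \<nu> z"
proof -
  obtain F where F: "F holomorphic_on unit_disc"
    and inverse: "\<And>z. z \<in> unit_disc \<Longrightarrow> of_real (\<nu> z) * F (of_real (norm z)) = 1"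
    and dominated: "\<And>z. z \<in> unit_disc \<Longrightarrow> norm (F z) \<le> Re (F (of_real (norm z)))"
    using assms unfolding analytic_weight_def by blast
  have pos: "0 < \<nu> z" if "z \<in> unit_disc" for z
  proof -
    have "\<nu> z \<noteq> 0"
      using inverse[OF that] by auto
    moreover have "0 \<le> \<nu> z"
      using assms that unfolding analytic_weight_def by (blast intro: is_weight_nonneg)
    ultimately show ?thesis
      by simp
  qed
  have F_radius: "F (of_real (norm z)) = of_real (1 / \<nu> z)" if "z \<in> unit_disc" for z
    using inverse[OF that] pos[OF that] by (simp add: field_simps)
  show ?thesis
  proof (rule that[OF F pos F_radius])
    show "norm (F z) \<le> 1 / \<nu> z" if "z \<in> unit_disc" for z
      using dominated[OF that] unfolding F_radius[OF that] by simp
  qed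
qed

lemma B_inf_norm_ge:
  assumes f: "f \<in> B_inf_w \<nu>" and z: "z \<in> unit_disc"
  shows "\<nu> z * norm (deriv f z) \<le> B_inf_norm \<nu> f"
proof -
  obtain C where "\<forall>z\<in>unit_disc. \<nu> z * norm (deriv f z) \<le> C"
    using f unfolding B_inf_w_def by blast
  then have "bdd_above ((\<lambda>z. \<nu> z * norm (deriv f z)) ` unit_disc)"
    by (intro bdd_aboveI2) blast
  then have "\<nu> z * norm (deriv f z) \<le> (SUP z\<in>unit_disc. \<nu> z * norm (deriv f z))"
    by (rule cSUP_upper[OF z])
  then show ?thesis
    unfolding B_inf_norm_def using norm_ge_zero[of "f 0"] by linarith
qed

lemma B_inf_norm_nonneg:
  assumes "f \<in> B_inf_w \<nu>" and "is_weight \<nu>"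
  shows "0 \<le> B_inf_norm \<nu> f"
proof -
  have "0 \<le> \<nu> 0 * norm (deriv f 0)"
    using is_weight_nonneg[OF assms(2), of 0] by simp
  then show ?thesis
    using B_inf_norm_ge[OF assms(1), of 0] by simp
qed

lemma integral_rescale_unit_interval:
  fixes G :: "real \<Rightarrow> 'a::real_normed_vector"
  assumes t: "0 < t"
  shows "integral {0..1} (\<lambda>u. t *\<^sub>R G (t * u)) = integral {0..t} G"
proof -
  have "(\<lambda>x. x / t) ` {0..t} = {0..1}"
    using t by simp
  then have "integral {0..1} (\<lambda>u. G (t * u)) = (1 / t) *\<^sub>R integral {0..t} G"
    using integral_stretch_real[of t 0 t G] t by simp
  then show ?thesis
    using t by simp
qed

lemma contour_integral_linepath_radius:
  assumes t: "0 \<le> t"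
  shows "contour_integral (linepath 0 (of_real t * \<zeta>)) k = \<zeta> * integral {0..t} (\<lambda>r. k (of_real r * \<zeta>))"
proof (cases "t = 0")
  case False
  then have t: "0 < t"
    using t by simp
  have "contour_integral (linepath 0 (of_real t * \<zeta>)) k
      = integral {0..1} (\<lambda>u. t *\<^sub>R (k (of_real (t * u) * \<zeta>) * \<zeta>))"
    by (simp add: contour_integral_integral linepath_def scaleR_conv_of_real mult_ac)
  also have "\<dots> = integral {0..t} (\<lambda>r. k (of_real r * \<zeta>) * \<zeta>)"
    by (rule integral_rescale_unit_interval[OF t])
  finally show ?thesis
    by (simp add: mult.commute)
qed simp

lemma continuous_on_radius:
  assumes h: "continuous_on unit_disc h" and \<zeta>: "norm \<zeta> = 1" and t: "t < 1"
  shows "continuous_on {0..t} (\<lambda>r. h (of_real r * \<zeta>))"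
  by (rule continuous_on_compose2[OF h]) (use \<zeta> t in \<open>auto intro!: continuous_intros simp: norm_mult\<close>)

lemma has_field_derivative_contour_integral_linepath_0:
  assumes k: "k holomorphic_on unit_disc" and z: "z \<in> unit_disc"
  shows "((\<lambda>z. contour_integral (linepath 0 z) k) has_field_derivative k z) (at z)"
proof -
  obtain G where G: "\<And>w. w \<in> unit_disc \<Longrightarrow> (G has_field_derivative k w) (at w within unit_disc)"
    using holomorphic_convex_primitive'[OF convex_ball open_ball k] by blast
  have primitive: "G w - G 0 = contour_integral (linepath 0 w) k" if w: "w \<in> unit_disc" for w
  proof -
    have "path_image (linepath 0 w) \<subseteq> unit_disc"
      unfolding path_image_linepath by (rule closed_segment_subset) (use w in auto)
    then have "(k has_contour_integral (G w - G 0)) (linepath 0 w)"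
      using contour_integral_primitive[OF G valid_path_linepath] by simp
    then show ?thesis
      by (simp add: contour_integral_unique)
  qed
  have "((\<lambda>w. G w - G 0) has_field_derivative k z) (at z)"
    using G[OF z] at_within_open[OF z open_ball] by (auto intro!: derivative_eq_intros)
  then show ?thesis
    by (rule has_field_derivative_transform_within_open[OF _ open_ball z primitive])
qed

lemma holomorphic_on_contour_integral_linepath_0:
  "k holomorphic_on unit_disc \<Longrightarrow> (\<lambda>z. contour_integral (linepath 0 z) k) holomorphic_on unit_disc"
  using has_field_derivative_contour_integral_linepath_0 holomorphic_on_open[OF open_ball] by blast

lemma deriv_contour_integral_linepath_0:
  "k holomorphic_on unit_disc \<Longrightarrow> z \<in> unit_disc \<Longrightarrow> deriv (\<lambda>z. contour_integral (linepath 0 z) k) z = k z"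
  by (rule DERIV_imp_deriv[OF has_field_derivative_contour_integral_linepath_0])

lemma B_inf_w_contour_integral_linepath_0:
  assumes k: "k holomorphic_on unit_disc" and bound: "\<And>z. z \<in> unit_disc \<Longrightarrow> \<nu> z * norm (k z) \<le> M"
  shows "(\<lambda>z. contour_integral (linepath 0 z) k) \<in> B_inf_w \<nu>"
    and "B_inf_norm \<nu> (\<lambda>z. contour_integral (linepath 0 z) k) \<le> M"
proof -
  have bound': "\<nu> z * norm (deriv (\<lambda>z. contour_integral (linepath 0 z) k) z) \<le> M" if "z \<in> unit_disc" for z
    using bound[OF that] deriv_contour_integral_linepath_0[OF k that] by simp
  then show "(\<lambda>z. contour_integral (linepath 0 z) k) \<in> B_inf_w \<nu>"
    unfolding B_inf_w_def using holomorphic_on_contour_integral_linepath_0[OF k] by blast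
  have "(SUP z\<in>unit_disc. \<nu> z * norm (deriv (\<lambda>z. contour_integral (linepath 0 z) k) z)) \<le> M"
    by (rule cSUP_least) (use bound' in auto)
  then show "B_inf_norm \<nu> (\<lambda>z. contour_integral (linepath 0 z) k) \<le> M"
    unfolding B_inf_norm_def by simp
qed

lemma holomorphic_S_op:
  assumes "f holomorphic_on unit_disc" and "g holomorphic_on unit_disc"
  shows "S_op g f holomorphic_on unit_disc"
  unfolding S_op_def[abs_def]
  by (intro holomorphic_on_contour_integral_linepath_0 holomorphic_intros holomorphic_deriv assms open_ball)

lemma S_op_radius:
  "0 \<le> t \<Longrightarrow> S_op g f (of_real t * \<zeta>) = \<zeta> * integral {0..t} (\<lambda>r. deriv f (of_real r * \<zeta>) * g (of_real r * \<zeta>))"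
  unfolding S_op_def by (rule contour_integral_linepath_radius)

section \<open>Boundedness of \<open>S_op\<close>\<close>

lemma continuous_on_radius_norm_div_weight:
  assumes g: "g holomorphic_on unit_disc" and \<nu>: "is_weight \<nu>"
    and pos: "\<And>z. z \<in> unit_disc \<Longrightarrow> 0 < \<nu> z" and \<zeta>: "norm \<zeta> = 1" and t: "t < 1"
  shows "continuous_on {0..t} (\<lambda>r. norm (g (of_real r * \<zeta>)) / \<nu> (of_real r))"
proof -
  have \<nu>_cont: "continuous_on {0..t} (\<lambda>r. \<nu> (of_real r))"
    using continuous_on_radius[where h = \<nu>, OF is_weight_continuous[OF \<nu>], of 1 t] t by simp
  have g_cont: "continuous_on {0..t} (\<lambda>r. g (of_real r * \<zeta>))"
    by (intro continuous_on_radius[where h = g] holomorphic_on_imp_continuous_on g \<zeta> t)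
  have nonzero: "\<forall>r\<in>{0..t}. \<nu> (of_real r) \<noteq> 0"
  proof
    fix r assume "r \<in> {0..t}"
    then have "0 < \<nu> (of_real r)"
      using t by (intro pos) auto
    then show "\<nu> (of_real r) \<noteq> 0"
      by simp
  qed
  show ?thesis
    by (rule continuous_on_divide[OF continuous_on_norm[OF g_cont] \<nu>_cont nonzero])
qed

lemma norm_S_op_radius_le:
  assumes g: "g holomorphic_on unit_disc" and f: "f \<in> B_inf_w \<nu>" and \<nu>: "is_weight \<nu>"
    and pos: "\<And>z. z \<in> unit_disc \<Longrightarrow> 0 < \<nu> z" and \<zeta>: "norm \<zeta> = 1" and t: "0 \<le> t" "t < 1"
  shows "norm (S_op g f (of_real t * \<zeta>))
    \<le> B_inf_norm \<nu> f * integral {0..t} (\<lambda>r. norm (g (of_real r * \<zeta>)) / \<nu> (of_real r))"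
proof -
  have fh: "f holomorphic_on unit_disc"
    using f unfolding B_inf_w_def by blast
  have on_disc: "of_real r * \<zeta> \<in> unit_disc" "of_real r \<in> unit_disc" if "r \<in> {0..t}" for r
    using that t \<zeta> by (auto simp: norm_mult)
  have "continuous_on unit_disc (\<lambda>w. deriv f w * g w)"
    by (intro holomorphic_on_imp_continuous_on holomorphic_intros holomorphic_deriv fh g open_ball)
  then have integrable: "(\<lambda>r. deriv f (of_real r * \<zeta>) * g (of_real r * \<zeta>)) integrable_on {0..t}"
    by (intro integrable_continuous_interval continuous_on_radius[where h = "\<lambda>w. deriv f w * g w", OF _ \<zeta> t(2)])
  have integrable': "(\<lambda>r. B_inf_norm \<nu> f * (norm (g (of_real r * \<zeta>)) / \<nu> (of_real r))) integrable_on {0..t}"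
    by (intro integrable_on_mult_right integrable_continuous_interval
        continuous_on_radius_norm_div_weight[OF g \<nu> pos \<zeta> t(2)])
  have "norm (S_op g f (of_real t * \<zeta>))
      = norm (integral {0..t} (\<lambda>r. deriv f (of_real r * \<zeta>) * g (of_real r * \<zeta>)))"
    unfolding S_op_radius[OF t(1)] norm_mult \<zeta> by simp
  also have "\<dots> \<le> integral {0..t} (\<lambda>r. B_inf_norm \<nu> f * (norm (g (of_real r * \<zeta>)) / \<nu> (of_real r)))"
  proof (rule integral_norm_bound_integral[OF integrable integrable'])
    fix r assume r: "r \<in> {0..t}"
    let ?w = "of_real r * \<zeta>"
    have "\<nu> ?w = \<nu> (of_real r)"
      using is_weight_radial[OF \<nu> on_disc(1)[OF r]] r \<zeta> by (simp add: norm_mult)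
    then have "norm (deriv f ?w) \<le> B_inf_norm \<nu> f / \<nu> (of_real r)"
      using B_inf_norm_ge[OF f on_disc(1)[OF r]] pos[OF on_disc(2)[OF r]] by (simp add: field_simps)
    then have "norm (deriv f ?w) * norm (g ?w) \<le> B_inf_norm \<nu> f / \<nu> (of_real r) * norm (g ?w)"
      by (rule mult_right_mono) simp
    then show "norm (deriv f ?w * g ?w) \<le> B_inf_norm \<nu> f * (norm (g ?w) / \<nu> (of_real r))"
      by (simp add: norm_mult)
  qed
  also have "\<dots> = B_inf_norm \<nu> f * integral {0..t} (\<lambda>r. norm (g (of_real r * \<zeta>)) / \<nu> (of_real r))"
    by (simp only: integral_mult_right)
  finally show ?thesis .
qed

lemma S_bounded_if_radial_integral_bounded:
  assumes g: "g holomorphic_on unit_disc" and \<nu>: "analytic_weight \<nu>" and \<mu>: "is_weight \<mu>"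
    and C: "\<forall>t\<in>{0..<1}. \<forall>\<theta>\<in>{0..<2*pi}. \<mu> (of_real t) *
      integral {0..t} (\<lambda>r. norm (g (of_real r * exp (\<i> * of_real \<theta>))) / \<nu> (of_real r)) \<le> C"
  shows "S_bounded g \<nu> \<mu>"
proof -
  have \<nu>_weight: "is_weight \<nu>"
    using \<nu> unfolding analytic_weight_def by blast
  have pos: "\<And>z. z \<in> unit_disc \<Longrightarrow> 0 < \<nu> z"
    using analytic_weightE[OF \<nu>] by blast
  have bound: "\<mu> z * norm (S_op g f z) \<le> C * B_inf_norm \<nu> f"
    if f: "f \<in> B_inf_w \<nu>" and z: "z \<in> unit_disc" for f z
  proof -
    define t where "t = norm z"
    define \<theta> where "\<theta> = Arg2pi z"
    define I where "I = integral {0..t} (\<lambda>r. norm (g (of_real r * exp (\<i> * of_real \<theta>))) / \<nu> (of_real r))"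
    have z_polar: "of_real t * exp (\<i> * of_real \<theta>) = z"
      unfolding t_def \<theta>_def by (rule Arg2pi_eq[symmetric])
    have t: "t \<in> {0..<1}" and \<theta>: "\<theta> \<in> {0..<2*pi}"
      unfolding t_def \<theta>_def using z Arg2pi_ge_0 Arg2pi_lt_2pi by auto
    have "norm (S_op g f z) \<le> B_inf_norm \<nu> f * I"
      using norm_S_op_radius_le[OF g f \<nu>_weight pos, of "exp (\<i> * of_real \<theta>)" t] t
      unfolding z_polar I_def by simp
    then have "\<mu> z * norm (S_op g f z) \<le> \<mu> z * (B_inf_norm \<nu> f * I)"
      using is_weight_nonneg[OF \<mu> z] by (rule mult_left_mono)
    also have "\<dots> = B_inf_norm \<nu> f * (\<mu> (of_real t) * I)"
      using is_weight_radial[OF \<mu> z] unfolding t_def by simp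
    also have "\<dots> \<le> B_inf_norm \<nu> f * C"
    proof (rule mult_left_mono)
      show "\<mu> (of_real t) * I \<le> C"
        using C t \<theta> unfolding I_def by blast
    qed (rule B_inf_norm_nonneg[OF f \<nu>_weight])
    finally show ?thesis
      by (simp add: mult.commute)
  qed
  have "S_op g f \<in> H_inf_w \<mu>" if f: "f \<in> B_inf_w \<nu>" for f
  proof -
    have "f holomorphic_on unit_disc"
      using f unfolding B_inf_w_def by blast
    then show ?thesis
      unfolding H_inf_w_def using holomorphic_S_op[OF _ g] bound[OF f] by blast
  qed
  then show ?thesis
    unfolding S_bounded_def using bound by blast
qed

lemma integral_le_norm_S_op_radius:
  assumes f: "f holomorphic_on unit_disc" and g: "g holomorphic_on unit_disc"
    and \<zeta>: "norm \<zeta> = 1" and t: "0 \<le> t" "t < 1" and w: "continuous_on {0..t} w"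
    and lower: "\<And>r. r \<in> {0..t} \<Longrightarrow> w r \<le> Re (deriv f (of_real r * \<zeta>) * g (of_real r * \<zeta>))"
  shows "integral {0..t} w \<le> norm (S_op g f (of_real t * \<zeta>))"
proof -
  let ?k = "\<lambda>r. deriv f (of_real r * \<zeta>) * g (of_real r * \<zeta>)"
  have "continuous_on unit_disc (\<lambda>w. deriv f w * g w)"
    by (intro holomorphic_on_imp_continuous_on holomorphic_intros holomorphic_deriv f g open_ball)
  then have k: "?k integrable_on {0..t}"
    by (intro integrable_continuous_interval continuous_on_radius[where h = "\<lambda>w. deriv f w * g w", OF _ \<zeta> t(2)])
  have "(\<lambda>r. Re (?k r)) integrable_on {0..t}"
    using integrable_linear[OF k bounded_linear_Re] unfolding o_def .
  then have "integral {0..t} w \<le> integral {0..t} (\<lambda>r. Re (?k r))"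
    by (rule integral_le[OF integrable_continuous_interval[OF w] _ lower])
  also have "\<dots> = Re (integral {0..t} ?k)"
    using integral_linear[OF k bounded_linear_Re] by (simp add: o_def)
  also have "\<dots> \<le> norm (integral {0..t} ?k)"
    by (rule complex_Re_le_cmod)
  also have "\<dots> = norm (S_op g f (of_real t * \<zeta>))"
    unfolding S_op_radius[OF t(1)] norm_mult \<zeta> by simp
  finally show ?thesis .
qed

text \<open>The test function is the primitive of \<open>w \<mapsto> F (cnj \<zeta> * w) * \<phi> w\<close>, where \<open>F r = 1 / \<nu> r\<close>
  is the analytic function defining the weight.\<close>

lemma analytic_weight_test_function:
  assumes \<nu>: "analytic_weight \<nu>" and \<phi>: "\<phi> holomorphic_on unit_disc"
    and \<phi>_bound: "\<And>z. z \<in> unit_disc \<Longrightarrow> norm (\<phi> z) \<le> M" and \<zeta>: "norm \<zeta> = 1"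
  obtains f where "f \<in> B_inf_w \<nu>" and "B_inf_norm \<nu> f \<le> M"
    and "\<And>r. 0 \<le> r \<Longrightarrow> r < 1 \<Longrightarrow> deriv f (of_real r * \<zeta>) = \<phi> (of_real r * \<zeta>) / of_real (\<nu> (of_real r))"
proof -
  obtain F where F: "F holomorphic_on unit_disc" and pos: "\<And>z. z \<in> unit_disc \<Longrightarrow> 0 < \<nu> z"
    and F_radius: "\<And>z. z \<in> unit_disc \<Longrightarrow> F (of_real (norm z)) = of_real (1 / \<nu> z)"
    and F_bound: "\<And>z. z \<in> unit_disc \<Longrightarrow> norm (F z) \<le> 1 / \<nu> z"
    using analytic_weightE[OF \<nu>] by blast
  have \<nu>_radial: "\<And>z. z \<in> unit_disc \<Longrightarrow> \<nu> z = \<nu> (of_real (norm z))"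
    using \<nu> unfolding analytic_weight_def by (blast intro: is_weight_radial)
  have norm_rot: "norm (cnj \<zeta> * z) = norm z" for z
    using \<zeta> by (simp add: norm_mult)
  define k where "k z = F (cnj \<zeta> * z) * \<phi> z" for z
  have "(F \<circ> (\<lambda>z. cnj \<zeta> * z)) holomorphic_on unit_disc"
    by (rule holomorphic_on_compose_gen[OF _ F]) (auto intro: holomorphic_intros simp: norm_rot)
  then have k: "k holomorphic_on unit_disc"
    unfolding k_def[abs_def] by (intro holomorphic_intros \<phi>) (simp add: o_def)
  have "\<nu> z * norm (k z) \<le> M" if z: "z \<in> unit_disc" for z
  proof -
    have "\<nu> (cnj \<zeta> * z) = \<nu> z"
      using \<nu>_radial[of "cnj \<zeta> * z"] \<nu>_radial[OF z] z by (simp add: norm_rot)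
    then have "norm (F (cnj \<zeta> * z)) \<le> 1 / \<nu> z"
      using F_bound[of "cnj \<zeta> * z"] z by (simp add: norm_rot)
    then have "norm (k z) \<le> 1 / \<nu> z * M"
      unfolding k_def norm_mult using \<phi>_bound[OF z] pos[OF z] by (intro mult_mono) auto
    then show ?thesis
      using pos[OF z] by (simp add: field_simps)
  qed
  note f = B_inf_w_contour_integral_linepath_0[OF k this]
  show ?thesis
  proof (rule that[OF f])
    fix r :: real assume r: "0 \<le> r" "r < 1"
    have on_disc: "of_real r * \<zeta> \<in> unit_disc" "of_real r \<in> unit_disc"
      using r \<zeta> by (auto simp: norm_mult)
    have rot: "cnj \<zeta> * (of_real r * \<zeta>) = of_real (norm (of_real r :: complex))"
      using cnj_mult_self_unit[OF \<zeta>] r by (simp add: mult.left_commute)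
    have "k (of_real r * \<zeta>) = of_real (1 / \<nu> (of_real r)) * \<phi> (of_real r * \<zeta>)"
      unfolding k_def rot F_radius[OF on_disc(2)] ..
    then show "deriv (\<lambda>z. contour_integral (linepath 0 z) k) (of_real r * \<zeta>)
        = \<phi> (of_real r * \<zeta>) / of_real (\<nu> (of_real r))"
      using deriv_contour_integral_linepath_0[OF k on_disc(1)] by (simp add: field_simps)
  qed
qed

lemma radial_integral_le_S_op_test_function:
  assumes g: "g holomorphic_on unit_disc" and \<nu>: "analytic_weight \<nu>"
    and \<phi>: "\<phi> holomorphic_on unit_disc" and \<phi>_bound: "\<And>z. z \<in> unit_disc \<Longrightarrow> norm (\<phi> z) \<le> M"
    and ray: "\<And>r. r \<in> {0..t} \<Longrightarrow> norm (g (of_real r * \<zeta>)) \<le> 2 * Re (\<phi> (of_real r * \<zeta>) * g (of_real r * \<zeta>))"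
    and \<zeta>: "norm \<zeta> = 1" and t: "0 \<le> t" "t < 1"
  obtains f where "f \<in> B_inf_w \<nu>" and "B_inf_norm \<nu> f \<le> M"
    and "integral {0..t} (\<lambda>r. norm (g (of_real r * \<zeta>)) / \<nu> (of_real r)) \<le> 2 * norm (S_op g f (of_real t * \<zeta>))"
proof -
  have \<nu>_weight: "is_weight \<nu>"
    using \<nu> unfolding analytic_weight_def by blast
  have pos: "\<And>z. z \<in> unit_disc \<Longrightarrow> 0 < \<nu> z"
    using analytic_weightE[OF \<nu>] by blast
  obtain f where f: "f \<in> B_inf_w \<nu>" "B_inf_norm \<nu> f \<le> M"
    and f': "\<And>r. 0 \<le> r \<Longrightarrow> r < 1 \<Longrightarrow> deriv f (of_real r * \<zeta>) = \<phi> (of_real r * \<zeta>) / of_real (\<nu> (of_real r))"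
    using analytic_weight_test_function[OF \<nu> \<phi> \<phi>_bound \<zeta>] by blast
  have "continuous_on {0..t} (\<lambda>r. norm (g (of_real r * \<zeta>)) / \<nu> (of_real r) / 2)"
    by (rule continuous_on_divide[OF continuous_on_radius_norm_div_weight[OF g \<nu>_weight pos \<zeta> t(2)]
        continuous_on_const]) auto
  then have "integral {0..t} (\<lambda>r. norm (g (of_real r * \<zeta>)) / \<nu> (of_real r) / 2) \<le> norm (S_op g f (of_real t * \<zeta>))"
  proof (rule integral_le_norm_S_op_radius[rotated 5])
    fix r assume r: "r \<in> {0..t}"
    let ?w = "of_real r * \<zeta>"
    have "norm (g ?w) / 2 \<le> Re (\<phi> ?w * g ?w)"
      using ray[OF r] by linarith
    moreover have "0 < \<nu> (of_real r)"
      using r t by (intro pos) auto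
    ultimately have "norm (g ?w) / 2 / \<nu> (of_real r) \<le> Re (\<phi> ?w * g ?w) / \<nu> (of_real r)"
      by (intro divide_right_mono) auto
    then have "norm (g ?w) / \<nu> (of_real r) / 2 \<le> Re (\<phi> ?w * g ?w) / \<nu> (of_real r)"
      by (simp add: divide_divide_eq_left mult.commute)
    then show "norm (g ?w) / \<nu> (of_real r) / 2 \<le> Re (deriv f ?w * g ?w)"
      using f' r t by (simp add: Re_divide_of_real)
  qed (use f \<zeta> t g in \<open>auto simp: B_inf_w_def\<close>)
  then have "integral {0..t} (\<lambda>r. norm (g (of_real r * \<zeta>)) / \<nu> (of_real r)) \<le> 2 * norm (S_op g f (of_real t * \<zeta>))"
    unfolding integral_divide by linarith
  with f show ?thesis
    using that by blast
qed

lemma radial_integral_bounded_if_S_bounded: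
  assumes g: "g holomorphic_on unit_disc" and log_g: "log_in_bloch g"
    and \<nu>: "analytic_weight \<nu>" and \<mu>: "is_weight \<mu>" and S: "S_bounded g \<nu> \<mu>"
  shows "\<exists>C. \<forall>t\<in>{0..<1}. \<forall>\<theta>\<in>{0..<2*pi}. \<mu> (of_real t) *
      integral {0..t} (\<lambda>r. norm (g (of_real r * exp (\<i> * of_real \<theta>))) / \<nu> (of_real r)) \<le> C"
proof -
  obtain C where C: "\<And>f z. f \<in> B_inf_w \<nu> \<Longrightarrow> z \<in> unit_disc \<Longrightarrow> \<mu> z * norm (S_op g f z) \<le> C * B_inf_norm \<nu> f"
    using S unfolding S_bounded_def by blast
  obtain M where phase: "\<And>t \<zeta>. 0 \<le> t \<Longrightarrow> t < 1 \<Longrightarrow> norm \<zeta> = 1 \<Longrightarrow>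
    \<exists>\<phi>. \<phi> holomorphic_on unit_disc \<and> (\<forall>z\<in>unit_disc. norm (\<phi> z) \<le> M) \<and>
      (\<forall>r\<in>{0..t}. norm (g (of_real r * \<zeta>)) \<le> 2 * Re (\<phi> (of_real r * \<zeta>) * g (of_real r * \<zeta>)))"
    using log_bloch_phase_correction[OF log_g] by blast
  have "\<mu> (of_real t) * integral {0..t} (\<lambda>r. norm (g (of_real r * \<zeta>)) / \<nu> (of_real r)) \<le> 2 * (\<bar>C\<bar> * M)"
    if t: "0 \<le> t" "t < 1" and \<zeta>: "norm \<zeta> = 1" for t \<zeta>
  proof -
    obtain \<phi> where \<phi>: "\<phi> holomorphic_on unit_disc" "\<And>z. z \<in> unit_disc \<Longrightarrow> norm (\<phi> z) \<le> M"
      and ray: "\<And>r. r \<in> {0..t} \<Longrightarrow> norm (g (of_real r * \<zeta>)) \<le> 2 * Re (\<phi> (of_real r * \<zeta>) * g (of_real r * \<zeta>))"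
      using phase[OF t \<zeta>] by blast
    obtain f where f: "f \<in> B_inf_w \<nu>" "B_inf_norm \<nu> f \<le> M"
      and radial: "integral {0..t} (\<lambda>r. norm (g (of_real r * \<zeta>)) / \<nu> (of_real r))
        \<le> 2 * norm (S_op g f (of_real t * \<zeta>))"
      using radial_integral_le_S_op_test_function[OF g \<nu> \<phi> ray \<zeta> t] by blast
    have tz: "of_real t * \<zeta> \<in> unit_disc" and "norm (of_real t * \<zeta>) = t"
      using t \<zeta> by (auto simp: norm_mult)
    then have \<mu>_eq: "\<mu> (of_real t * \<zeta>) = \<mu> (of_real t)" and "0 \<le> \<mu> (of_real t)"
      using is_weight_radial[OF \<mu> tz] is_weight_nonneg[OF \<mu> tz] by simp_all
    then have "\<mu> (of_real t) * integral {0..t} (\<lambda>r. norm (g (of_real r * \<zeta>)) / \<nu> (of_real r))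
        \<le> \<mu> (of_real t) * (2 * norm (S_op g f (of_real t * \<zeta>)))"
      using radial by (intro mult_left_mono)
    also have "\<dots> = 2 * (\<mu> (of_real t * \<zeta>) * norm (S_op g f (of_real t * \<zeta>)))"
      unfolding \<mu>_eq by simp
    also have "\<dots> \<le> 2 * (\<bar>C\<bar> * B_inf_norm \<nu> f)"
      using C[OF f(1) tz] abs_ge_self[of C] B_inf_norm_nonneg[OF f(1)] \<nu>
      by (smt (verit) analytic_weight_def mult_right_mono)
    also have "\<dots> \<le> 2 * (\<bar>C\<bar> * M)"
      using f(2) by (simp add: mult_left_mono)
    finally show ?thesis .
  qed
  then show ?thesis
    by (intro exI[of _ "2 * (\<bar>C\<bar> * M)"] ballI) auto
qed

theorem proposition2:
  fixes g :: "complex \<Rightarrow> complex" and \<nu> \<mu> :: "complex \<Rightarrow> real"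
  assumes "g holomorphic_on unit_disc"
    and "log_in_bloch g"
    and "analytic_weight \<nu>"
    and "is_weight \<mu>"
  shows "S_bounded g \<nu> \<mu> \<longleftrightarrow>
    (\<exists>C. \<forall>t\<in>{0..<1}. \<forall>\<theta>\<in>{0..<2*pi}.
       \<mu> (complex_of_real t) *
         integral {0..t} (\<lambda>r. norm (g (complex_of_real r * exp (\<i> * complex_of_real \<theta>))) / \<nu> (complex_of_real r))
       \<le> C)"
  using radial_integral_bounded_if_S_bounded[OF assms] S_bounded_if_radial_integral_bounded[OF assms(1,3,4)]
  by blast
end
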